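(* Let $n\ge 5$ and let $x,y$ be adjacent vertices of $Q_n$ with $f_n(x)+f_n(y)=\operatorname{str}_{f_n}(Q_n)$. If $x$ and $y$ both begin with the bit $0$, then $$\operatorname{str}_{f_n}(Q_n)\le \operatorname{str}_{f_{n-2}}(Q_{n-2})+3\cdot 2^{n-2}+\binom{n-3}{\lceil (n-3)/2\rceil}+\binom{n-2}{\lceil (n-2)/2\rceil}.$$
   Context: $Q_n$ is the $n$-dimensional hypercube: vertices are the $n$-bit strings, adjacent iff they differ in exactly one position. For a bijection $f:V(G)\to\{1,\dots,|V(G)|\}$, $\operatorname{str}_f(G)=\max\{f(u)+f(v):uv\in E(G)\}$. An $n$-bit string is $x_1\cdots x_n$, $x_i\in\{0,1\}$; its weight is its number of $1$s. Lexicographic order: $x<y$ if for some $k$, $x_j=y_j$ for $j<k$ and $x_k<y_k$. $S_n^i$ is the sequence of $n$-bit strings of weight $i$ in increasing lexicographic order; $R_n^i$ is the same set in decreasing lexicographic order. $S_n$ is the concatenation $(R_n^1,R_n^3,\dots,R_n^{n-1},S_n^n,S_n^{n-2},\dots,S_n^2,S_n^0)$ for even $n$ and $(R_n^1,R_n^3,\dots,R_n^{n-2},R_n^n,S_n^{n-1},\dots,S_n^2,S_n^0)$ for odd $n$; $f_n$ maps the string in position $j$ of $S_n$ to $j$. *)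

theory Defs
  imports Complex_Main
begin

text \<open>n-bit strings are bool lists of length n (False = bit 0, True = bit 1).\<close>

definition bitstrings :: "nat \<Rightarrow> bool list set" where
  "bitstrings n = {xs. length xs = n}"

definition weight :: "bool list \<Rightarrow> nat" where
  "weight xs = length (filter id xs)"

definition cube_adj :: "bool list \<Rightarrow> bool list \<Rightarrow> bool" where
  "cube_adj x y \<longleftrightarrow> length x = length y \<and>
     card {i. i < length x \<and> x ! i \<noteq> y ! i} = 1"

definition lex_less :: "bool list \<Rightarrow> bool list \<Rightarrow> bool" where
  "lex_less x y \<longleftrightarrow> (\<exists>k. k < length x \<and> k < length y \<and>
      (\<forall>j<k. x ! j = y ! j) \<and> \<not> x ! k \<and> y ! k)"

definition S_seq :: "nat \<Rightarrow> nat \<Rightarrow> bool list list" where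
  "S_seq n i = (THE l. set l = {x \<in> bitstrings n. weight x = i} \<and> distinct l \<and>
                      sorted_wrt lex_less l)"

definition R_seq :: "nat \<Rightarrow> nat \<Rightarrow> bool list list" where
  "R_seq n i = rev (S_seq n i)"

definition full_seq :: "nat \<Rightarrow> bool list list" where
  "full_seq n =
    (if even n then
       concat (map (R_seq n) (filter odd [1..<n])) @ S_seq n n @
       concat (map (S_seq n) (rev (filter even [0..<n-1]))) 
     else
       concat (map (R_seq n) (filter odd [1..<n-1])) @ R_seq n n @
       concat (map (S_seq n) (rev (filter even [0..<n]))))"

definition f_lab :: "nat \<Rightarrow> bool list \<Rightarrow> nat" where
  "f_lab n x = Suc (THE j. j < length (full_seq n) \<and> full_seq n ! j = x)"

definition cube_str :: "(bool list \<Rightarrow> nat) \<Rightarrow> nat \<Rightarrow> nat" where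
  "cube_str f n = Max {f u + f v | u v. u \<in> bitstrings n \<and> v \<in> bitstrings n \<and> cube_adj u v}"

end

theory Submission
  imports Defs "HOL-Library.List_Lexorder"
begin

(*
  The label f_n(x) is one plus the number of strings that precede x in S_n, so it depends only on
  the weight |x| and on the lexicographic rank of x among the strings of that weight. Counting
  gives, for an edge xy of Q_(m+1) with |x| odd,
    f(x) + f(y) = 2^(m+1) + 1 + offset,  offset = (|x| - |y|) C(m, max |x| |y|) + rank y - rank x.
  Let n = p + 3 and x = 0ac, y = 0bd. The offset of xy is compared with that of an edge of
  Q_(p+1): with cd if a = b = 0; with the complemented edge (not d, not c), in which the ranks
  enter with the opposite sign, if a = b = 1 (for even p the common first bit of c and d is kept,
  so that parities are preserved); and with (10...0, 0...0), of offset 0, if xy flips the second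
  bit, or the third one when a = b = 1 and p is even. In every case the offsets differ by at most
  C(p, ceil(p/2)) + C(p+1, ceil((p+1)/2)), and the constant terms by 2^(p+3) - 2^(p+1) = 3 * 2^(p+1).
*)

section \<open>Bit strings\<close>

lemma finite_bitstrings [simp]: "finite (bitstrings n)"
  unfolding bitstrings_def using finite_lists_length_eq[of "UNIV :: bool set" n] by simp

lemma card_bitstrings: "card (bitstrings n) = 2 ^ n"
  unfolding bitstrings_def using card_lists_length_eq[of "UNIV :: bool set" n] by simp

lemma length_bitstrings: "x \<in> bitstrings n \<Longrightarrow> length x = n"
  by (simp add: bitstrings_def)

lemma Cons_in_bitstrings [simp]: "a # x \<in> bitstrings (Suc n) \<longleftrightarrow> x \<in> bitstrings n"
  by (simp add: bitstrings_def)

lemma map_Not_in_bitstrings [simp]: "map Not x \<in> bitstrings n \<longleftrightarrow> x \<in> bitstrings n"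
  by (simp add: bitstrings_def)

lemma bitstrings_Suc: "bitstrings (Suc m) = Cons False ` bitstrings m \<union> Cons True ` bitstrings m"
proof -
  have "x \<in> Cons False ` bitstrings m \<union> Cons True ` bitstrings m" if "x \<in> bitstrings (Suc m)" for x
    using that by (cases x) (auto simp: bitstrings_def)
  then show ?thesis by (auto simp: bitstrings_def)
qed

lemma weight_Nil [simp]: "weight [] = 0"
  and weight_Cons [simp]: "weight (a # x) = (if a then Suc (weight x) else weight x)"
  by (simp_all add: weight_def)

lemma weight_replicate_False [simp]: "weight (replicate k False) = 0"
  by (induction k) auto

lemma weight_le_length: "weight x \<le> length x"
  unfolding weight_def by (rule length_filter_le)

lemma weight_map_Not: "weight (map Not x) = length x - weight x"
proof -
  have "weight (map Not x) + weight x = length x" by (induction x) auto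
  then show ?thesis by simp
qed

lemma lex_less_Nil [simp]: "\<not> lex_less [] y" "\<not> lex_less x []"
  by (simp_all add: lex_less_def)

lemma lex_less_Cons [simp]:
  "lex_less (a # x) (b # y) \<longleftrightarrow> (\<not> a \<and> b) \<or> (a = b \<and> lex_less x y)"
proof
  assume "lex_less (a # x) (b # y)"
  then obtain k where k: "k < length (a # x)" "k < length (b # y)"
    "\<forall>j<k. (a # x) ! j = (b # y) ! j" "\<not> (a # x) ! k" "(b # y) ! k"
    unfolding lex_less_def by blast
  show "(\<not> a \<and> b) \<or> (a = b \<and> lex_less x y)"
  proof (cases k)
    case 0
    then show ?thesis using k by simp
  next
    case (Suc k')
    then have "a = b" using k(3) by force
    moreover have "lex_less x y"
      unfolding lex_less_def using k Suc by (intro exI[of _ k']) force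
    ultimately show ?thesis by simp
  qed
next
  assume "(\<not> a \<and> b) \<or> (a = b \<and> lex_less x y)"
  then show "lex_less (a # x) (b # y)"
  proof
    assume "\<not> a \<and> b"
    then show ?thesis unfolding lex_less_def by (intro exI[of _ 0]) auto
  next
    assume "a = b \<and> lex_less x y"
    then obtain k where "a = b" "k < length x" "k < length y" "\<forall>j<k. x ! j = y ! j" "\<not> x ! k" "y ! k"
      unfolding lex_less_def by blast
    then show ?thesis
      unfolding lex_less_def by (intro exI[of _ "Suc k"]) (auto simp: nth_Cons split: nat.split)
  qed
qed

lemma lex_less_imp_less: "lex_less x y \<Longrightarrow> x < y"
proof (induction x arbitrary: y)
  case (Cons a x)
  then show ?case by (cases y) (auto simp: less_bool_def)
qed simp

lemma less_imp_lex_less: "length x = length y \<Longrightarrow> x < y \<Longrightarrow> lex_less x y"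
proof (induction x arbitrary: y)
  case (Cons a x)
  then show ?case by (cases y) (auto simp: less_bool_def)
qed simp

lemma lex_less_irrefl [simp]: "\<not> lex_less x x"
  using lex_less_imp_less by blast

lemma lex_less_trans: "lex_less x y \<Longrightarrow> lex_less y z \<Longrightarrow> lex_less x z"
proof (induction x arbitrary: y z)
  case (Cons a x)
  then show ?case by (cases y; cases z) auto
qed simp

lemma lex_less_linear: "length x = length y \<Longrightarrow> lex_less x y \<or> x = y \<or> lex_less y x"
  using less_imp_lex_less[of x y] less_imp_lex_less[of y x] by force

lemma lex_less_map_Not [simp]: "lex_less (map Not x) (map Not y) \<longleftrightarrow> lex_less y x"
proof (induction x arbitrary: y)
  case (Cons a x)
  then show ?case by (cases y) auto
qed simp

section \<open>The label of a string counts its predecessors in \<open>S_n\<close>\<close>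

lemma S_seq_spec:
  "set (S_seq n i) = {x \<in> bitstrings n. weight x = i} \<and> distinct (S_seq n i) \<and>
   sorted_wrt lex_less (S_seq n i)"
proof -
  let ?A = "{x \<in> bitstrings n. weight x = i}"
  obtain xs where xs: "sorted_wrt (<) xs" "set xs = ?A"
    using ex1_sorted_list_for_set_if_finite[of ?A] by auto
  have "set xs = ?A \<and> distinct xs \<and> sorted_wrt lex_less xs"
  proof (intro conjI)
    have "\<forall>a\<in>set xs. length a = n" using xs(2) by (auto simp: bitstrings_def)
    then show "sorted_wrt lex_less xs"
      using xs(1) by (induction xs) (auto intro: less_imp_lex_less)
  qed (use xs in \<open>auto simp: strict_sorted_iff\<close>)
  moreover have "ys = xs" if "set ys = ?A \<and> distinct ys \<and> sorted_wrt lex_less ys" for ys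
  proof -
    have "sorted_wrt (<) ys"
      using that sorted_wrt_mono_rel[of ys lex_less "(<)"] lex_less_imp_less by blast
    then show ?thesis using strict_sorted_equal[OF xs(1)] that xs(2) by blast
  qed
  ultimately have "S_seq n i = xs"
    unfolding S_seq_def by (intro the_equality) blast+
  with \<open>set xs = ?A \<and> distinct xs \<and> sorted_wrt lex_less xs\<close> show ?thesis by simp
qed

lemma set_S_seq [simp]: "set (S_seq n i) = {x \<in> bitstrings n. weight x = i}"
  and set_R_seq [simp]: "set (R_seq n i) = {x \<in> bitstrings n. weight x = i}"
  using S_seq_spec by (simp_all add: R_seq_def)

lemma sorted_S_seq: "sorted_wrt lex_less (S_seq n i)"
  and sorted_R_seq: "sorted_wrt (\<lambda>x y. lex_less y x) (R_seq n i)"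
  using S_seq_spec by (simp_all add: R_seq_def sorted_wrt_rev)

definition precedes :: "bool list \<Rightarrow> bool list \<Rightarrow> bool" where
  "precedes z x \<longleftrightarrow>
     (odd (weight z) \<and> even (weight x)) \<or>
     (odd (weight z) \<and> odd (weight x) \<and>
        (weight z < weight x \<or> weight z = weight x \<and> lex_less x z)) \<or>
     (even (weight z) \<and> even (weight x) \<and>
        (weight x < weight z \<or> weight z = weight x \<and> lex_less z x))"

lemma precedes_irrefl: "\<not> precedes x x"
  by (auto simp: precedes_def)

lemma precedes_trans: "precedes x y \<Longrightarrow> precedes y z \<Longrightarrow> precedes x z"
  unfolding precedes_def by (auto dest: lex_less_trans)

lemma sorted_wrt_concat_map:
  assumes "sorted_wrt Q is"
    and "\<And>i. i \<in> set is \<Longrightarrow> sorted_wrt R (g i)"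
    and "\<And>i j a b. i \<in> set is \<Longrightarrow> j \<in> set is \<Longrightarrow> Q i j \<Longrightarrow> a \<in> set (g i) \<Longrightarrow> b \<in> set (g j) \<Longrightarrow> R a b"
  shows "sorted_wrt R (concat (map g is))"
  using assms by (induction "is") (simp_all add: sorted_wrt_append, metis)

lemma sorted_R_seq_precedes: "odd i \<Longrightarrow> sorted_wrt precedes (R_seq n i)"
  using sorted_R_seq[of n i] by (rule sorted_wrt_mono_rel[rotated]) (auto simp: precedes_def)

lemma sorted_S_seq_precedes: "even i \<Longrightarrow> sorted_wrt precedes (S_seq n i)"
  using sorted_S_seq[of n i] by (rule sorted_wrt_mono_rel[rotated]) (auto simp: precedes_def)

lemma sorted_full_seq: "sorted_wrt precedes (full_seq n)"
proof -
  have odd_part: "sorted_wrt precedes (concat (map (R_seq n) (filter odd [1..<k])))" for k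
    by (rule sorted_wrt_concat_map[where Q = "(<)"])
       (auto simp: sorted_wrt_filter sorted_wrt_upt sorted_R_seq_precedes precedes_def)
  have even_part: "sorted_wrt precedes (concat (map (S_seq n) (rev (filter even [0..<k]))))" for k
    by (rule sorted_wrt_concat_map[where Q = "(>)"])
       (auto simp: sorted_wrt_rev sorted_wrt_filter sorted_wrt_upt sorted_S_seq_precedes precedes_def)
  have odd_even: "precedes z x" if "odd (weight z)" "even (weight x)" for z x
    using that by (simp add: precedes_def)
  have even_desc: "precedes z x" if "even (weight z)" "even (weight x)" "weight x < weight z" for z x
    using that by (simp add: precedes_def)
  have odd_asc: "precedes z x" if "odd (weight z)" "odd (weight x)" "weight z < weight x" for z x
    using that by (simp add: precedes_def)
  show ?thesis
    unfolding full_seq_def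
    using odd_part even_part sorted_R_seq_precedes[of n n] sorted_S_seq_precedes[of n n]
    by (simp add: sorted_wrt_append) (auto intro: odd_even even_desc odd_asc)
qed

lemma distinct_full_seq: "distinct (full_seq n)"
proof -
  have "sorted_wrt precedes xs \<Longrightarrow> distinct xs" for xs
    by (induction xs) (auto simp: precedes_irrefl)
  then show ?thesis using sorted_full_seq by blast
qed

lemma set_full_seq: "set (full_seq n) = bitstrings n"
proof
  show "set (full_seq n) \<subseteq> bitstrings n"
    unfolding full_seq_def by auto
  show "bitstrings n \<subseteq> set (full_seq n)"
  proof
    fix x assume x: "x \<in> bitstrings n"
    let ?w = "weight x"
    have "?w \<le> n" using x weight_le_length length_bitstrings by metis
    then consider "odd ?w" "?w < n" | "?w = n" | "even ?w" "?w < n"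
      by linarith
    then show "x \<in> set (full_seq n)"
    proof cases
      case 1
      then have "?w \<in> set (filter odd [1..<(if even n then n else n - 1)])"
        by (cases "even n"; simp; presburger)
      then show ?thesis using x unfolding full_seq_def by (auto split: if_splits)
    next
      case 2
      then show ?thesis using x unfolding full_seq_def by auto
    next
      case 3
      then have "?w \<in> set (filter even [0..<(if even n then n - 1 else n)])"
        by (cases "even n"; simp; presburger)
      then show ?thesis using x unfolding full_seq_def by (auto split: if_splits)
    qed
  qed
qed

lemma sorted_wrt_card_before_nth:
  assumes "sorted_wrt R xs" "distinct xs" "i < length xs"
    and "\<And>a. \<not> R a a" "\<And>a b c. R a b \<Longrightarrow> R b c \<Longrightarrow> R a c"
  shows "card {z \<in> set xs. R z (xs ! i)} = i"
proof -
  have "{z \<in> set xs. R z (xs ! i)} = set (take i xs)"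
  proof (intro set_eqI iffI)
    fix z assume "z \<in> {z \<in> set xs. R z (xs ! i)}"
    then obtain j where j: "j < length xs" "z = xs ! j" "R (xs ! j) (xs ! i)"
      by (auto simp: in_set_conv_nth)
    have "j < i"
    proof (rule ccontr)
      assume "\<not> j < i"
      then consider "j = i" | "i < j" by linarith
      then show False
      proof cases
        case 1
        then show False using j(3) assms(4) by simp
      next
        case 2
        then have "R (xs ! i) (xs ! j)" using assms(1) j(1) sorted_wrt_nth_less by blast
        then show False using j(3) assms(4,5) by blast
      qed
    qed
    then show "z \<in> set (take i xs)"
      using j(1,2) by (auto simp: in_set_conv_nth)
  next
    fix z assume "z \<in> set (take i xs)"
    then obtain j where "j < i" "z = xs ! j" using assms(3) by (auto simp: in_set_conv_nth)
    then show "z \<in> {z \<in> set xs. R z (xs ! i)}"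
      using assms(1,3) sorted_wrt_nth_less[of R xs j i] by auto
  qed
  then show ?thesis using assms(2,3) by (simp add: distinct_card)
qed

lemma f_lab_eq_card_precedes:
  assumes "x \<in> bitstrings n"
  shows "f_lab n x = Suc (card {z \<in> bitstrings n. precedes z x})"
proof -
  obtain i where i: "i < length (full_seq n)" "full_seq n ! i = x"
    using assms set_full_seq by (metis in_set_conv_nth)
  then have "(THE j. j < length (full_seq n) \<and> full_seq n ! j = x) = i"
    using distinct_full_seq nth_eq_iff_index_eq by blast
  then have "f_lab n x = Suc i" by (simp add: f_lab_def)
  also have "i = card {z \<in> set (full_seq n). precedes z (full_seq n ! i)}"
    using sorted_wrt_card_before_nth[OF sorted_full_seq distinct_full_seq i(1)]
      precedes_irrefl precedes_trans by simp
  finally show ?thesis using i(2) by (simp add: set_full_seq)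
qed

section \<open>Counting by weight and lexicographic rank\<close>

lemma card_Collect_disj:
  assumes "finite S" "\<And>z. z \<in> S \<Longrightarrow> P z \<Longrightarrow> Q z \<Longrightarrow> False"
  shows "card {z \<in> S. P z \<or> Q z} = card {z \<in> S. P z} + card {z \<in> S. Q z}"
proof -
  have "{z \<in> S. P z \<or> Q z} = {z \<in> S. P z} \<union> {z \<in> S. Q z}" by blast
  also have "card \<dots> = card {z \<in> S. P z} + card {z \<in> S. Q z}"
    using assms by (intro card_Un_disjoint) auto
  finally show ?thesis .
qed

lemma card_bitstrings_Suc:
  "card {z \<in> bitstrings (Suc m). P z} =
   card {z \<in> bitstrings m. P (False # z)} + card {z \<in> bitstrings m. P (True # z)}"
proof -
  have "{z \<in> bitstrings (Suc m). P z} =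
      Cons False ` {z \<in> bitstrings m. P (False # z)} \<union> Cons True ` {z \<in> bitstrings m. P (True # z)}"
    unfolding bitstrings_Suc by auto
  also have "card \<dots> = card (Cons False ` {z \<in> bitstrings m. P (False # z)})
      + card (Cons True ` {z \<in> bitstrings m. P (True # z)})"
    by (rule card_Un_disjoint) auto
  finally show ?thesis by (simp add: card_image)
qed

definition weight_count :: "nat \<Rightarrow> (nat \<Rightarrow> bool) \<Rightarrow> nat" where
  "weight_count m P = card {z \<in> bitstrings m. P (weight z)}"

lemma weight_count_cong: "(\<And>v. P v \<longleftrightarrow> Q v) \<Longrightarrow> weight_count m P = weight_count m Q"
  unfolding weight_count_def by simp

lemma weight_count_disj:
  "(\<And>v. P v \<Longrightarrow> Q v \<Longrightarrow> False) \<Longrightarrow>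
   weight_count m (\<lambda>v. P v \<or> Q v) = weight_count m P + weight_count m Q"
  unfolding weight_count_def by (rule card_Collect_disj) auto

lemma weight_count_Suc:
  "weight_count (Suc m) P = weight_count m P + weight_count m (\<lambda>v. P (Suc v))"
  unfolding weight_count_def by (simp add: card_bitstrings_Suc)

lemma weight_count_True: "weight_count m (\<lambda>v. True) = 2 ^ m"
  by (simp add: weight_count_def card_bitstrings)

lemma weight_count_eq: "weight_count m (\<lambda>v. v = k) = m choose k"
proof (induction m arbitrary: k)
  case 0
  have "{z \<in> bitstrings 0. weight z = k} = (if k = 0 then {[]} else {})"
    by (auto simp: bitstrings_def)
  then show ?case by (simp add: weight_count_def)
next
  case (Suc m)
  then show ?case by (cases k) (simp_all add: weight_count_Suc, simp add: weight_count_def)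
qed

lemma weight_count_trichotomy:
  "weight_count m (\<lambda>v. v < k) + (m choose k) + weight_count m (\<lambda>v. k < v) = 2 ^ m"
proof -
  have "2 ^ m = weight_count m (\<lambda>v. (v < k \<or> v = k) \<or> k < v)"
    unfolding weight_count_True[symmetric] by (rule weight_count_cong) auto
  also have "\<dots> = weight_count m (\<lambda>v. v < k \<or> v = k) + weight_count m (\<lambda>v. k < v)"
    by (rule weight_count_disj) auto
  also have "weight_count m (\<lambda>v. v < k \<or> v = k) = weight_count m (\<lambda>v. v < k) + (m choose k)"
    by (subst weight_count_disj) (auto simp: weight_count_eq)
  finally show ?thesis by simp
qed

definition lex_rank :: "bool list \<Rightarrow> nat" where
  "lex_rank x = card {z \<in> bitstrings (length x). weight z = weight x \<and> lex_less z x}"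

lemma lex_rank_Nil [simp]: "lex_rank [] = 0"
  by (simp add: lex_rank_def)

lemma lex_rank_False_Cons [simp]: "lex_rank (False # x) = lex_rank x"
  by (simp add: lex_rank_def card_bitstrings_Suc)

lemma lex_rank_True_Cons [simp]: "lex_rank (True # x) = (length x choose Suc (weight x)) + lex_rank x"
  by (simp add: lex_rank_def card_bitstrings_Suc weight_count_eq[unfolded weight_count_def])

lemma lex_rank_replicate_False [simp]: "lex_rank (replicate k False) = 0"
  by (induction k) auto

lemma card_lex_greater:
  assumes "x \<in> bitstrings n"
  shows "card {z \<in> bitstrings n. weight z = weight x \<and> lex_less x z} + lex_rank x + 1
    = n choose weight x"
proof -
  have "n choose weight x = weight_count n (\<lambda>v. v = weight x)"
    by (simp add: weight_count_eq)
  also have "\<dots> = card {z \<in> bitstrings n. weight z = weight x \<and> lex_less z x \<or>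
      z = x \<or> weight z = weight x \<and> lex_less x z}"
    unfolding weight_count_def using assms lex_less_linear[of _ x]
    by (intro arg_cong[where f = card]) (force simp: bitstrings_def)
  also have "\<dots> = lex_rank x + card {z \<in> bitstrings n. z = x \<or> weight z = weight x \<and> lex_less x z}"
    using assms unfolding lex_rank_def
    by (subst card_Collect_disj) (auto simp: length_bitstrings dest: lex_less_trans)
  also have "card {z \<in> bitstrings n. z = x \<or> weight z = weight x \<and> lex_less x z}
      = 1 + card {z \<in> bitstrings n. weight z = weight x \<and> lex_less x z}"
    using assms by (subst card_Collect_disj) (auto simp: Collect_conv_if)
  finally show ?thesis by simp
qed

lemma lex_rank_map_Not: "lex_rank (map Not x) + lex_rank x + 1 = length x choose weight x"
proof -
  let ?n = "length x"
  have "{z \<in> bitstrings ?n. weight z = weight (map Not x) \<and> lex_less z (map Not x)}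
      = map Not ` {z \<in> bitstrings ?n. weight z = weight x \<and> lex_less x z}"
  proof (intro set_eqI iffI)
    fix z assume "z \<in> {z \<in> bitstrings ?n. weight z = weight (map Not x) \<and> lex_less z (map Not x)}"
    moreover have "map Not (map Not z) = z" by (simp add: comp_def)
    ultimately have "map Not z \<in> {z \<in> bitstrings ?n. weight z = weight x \<and> lex_less x z}"
      using weight_le_length[of x] lex_less_map_Not[of "map Not z" x]
      by (auto simp: weight_map_Not length_bitstrings)
    then show "z \<in> map Not ` {z \<in> bitstrings ?n. weight z = weight x \<and> lex_less x z}"
      by (rule rev_image_eqI) (simp add: comp_def)
  qed (auto simp: weight_map_Not length_bitstrings)
  moreover have "inj (map Not)" by (simp add: inj_def)
  ultimately have "lex_rank (map Not x) = card {z \<in> bitstrings ?n. weight z = weight x \<and> lex_less x z}"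
    by (simp add: lex_rank_def card_image[OF inj_on_subset[OF _ subset_UNIV]])
  then show ?thesis using card_lex_greater[of x ?n] by (simp add: bitstrings_def)
qed

section \<open>The label sum of an edge\<close>

lemma f_lab_odd_weight:
  assumes x: "x \<in> bitstrings (Suc m)" and odd: "odd (weight x)"
  shows "f_lab (Suc m) x + lex_rank x = weight_count m (\<lambda>v. v + 1 < weight x) + (Suc m choose weight x)"
proof -
  let ?w = "weight x"
  have "card {z \<in> bitstrings (Suc m). precedes z x} = card {z \<in> bitstrings (Suc m).
      odd (weight z) \<and> weight z < ?w \<or> weight z = ?w \<and> lex_less x z}"
    using odd by (intro arg_cong[where f = card]) (auto simp: precedes_def)
  also have "\<dots> = weight_count (Suc m) (\<lambda>v. odd v \<and> v < ?w)
      + card {z \<in> bitstrings (Suc m). weight z = ?w \<and> lex_less x z}"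
    unfolding weight_count_def by (rule card_Collect_disj) auto
  also have "weight_count (Suc m) (\<lambda>v. odd v \<and> v < ?w)
      = weight_count m (\<lambda>v. odd v \<and> v < ?w) + weight_count m (\<lambda>v. even v \<and> v + 1 < ?w)"
    by (simp add: weight_count_Suc)
  also have "\<dots> = weight_count m (\<lambda>v. odd v \<and> v < ?w \<or> even v \<and> v + 1 < ?w)"
    by (rule weight_count_disj[symmetric]) auto
  also have "\<dots> = weight_count m (\<lambda>v. v + 1 < ?w)"
    using odd by (intro weight_count_cong) presburger
  finally show ?thesis
    using f_lab_eq_card_precedes[OF x] card_lex_greater[OF x] by simp
qed

lemma f_lab_even_weight:
  assumes x: "x \<in> bitstrings (Suc m)" and even: "even (weight x)"
  shows "f_lab (Suc m) x = 2 ^ m + weight_count m (\<lambda>v. weight x < v) + lex_rank x + 1"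
proof -
  let ?w = "weight x"
  have "card {z \<in> bitstrings (Suc m). precedes z x} = card {z \<in> bitstrings (Suc m).
      (odd (weight z) \<or> even (weight z) \<and> ?w < weight z) \<or> weight z = ?w \<and> lex_less z x}"
    using even by (intro arg_cong[where f = card]) (auto simp: precedes_def)
  also have "\<dots> = weight_count (Suc m) (\<lambda>v. odd v \<or> even v \<and> ?w < v) + lex_rank x"
    unfolding weight_count_def lex_rank_def length_bitstrings[OF x]
    using even by (intro card_Collect_disj) auto
  also have "weight_count (Suc m) (\<lambda>v. odd v \<or> even v \<and> ?w < v)
      = weight_count (Suc m) odd + weight_count (Suc m) (\<lambda>v. even v \<and> ?w < v)"
    by (rule weight_count_disj) auto
  also have "weight_count (Suc m) odd = weight_count m odd + weight_count m even"
    by (simp add: weight_count_Suc)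
  also have "\<dots> = weight_count m (\<lambda>v. odd v \<or> even v)"
    by (rule weight_count_disj[symmetric]) auto
  also have "\<dots> = 2 ^ m"
    by (simp add: weight_count_True)
  also have "weight_count (Suc m) (\<lambda>v. even v \<and> ?w < v)
      = weight_count m (\<lambda>v. even v \<and> ?w < v) + weight_count m (\<lambda>v. odd v \<and> ?w < Suc v)"
    by (simp add: weight_count_Suc)
  also have "\<dots> = weight_count m (\<lambda>v. even v \<and> ?w < v \<or> odd v \<and> ?w < Suc v)"
    by (rule weight_count_disj[symmetric]) auto
  also have "\<dots> = weight_count m (\<lambda>v. ?w < v)"
    using even by (intro weight_count_cong) presburger
  finally show ?thesis
    using f_lab_eq_card_precedes[OF x] by simp
qed

definition edge_offset :: "nat \<Rightarrow> bool list \<Rightarrow> bool list \<Rightarrow> int" where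
  "edge_offset m x y = (int (weight x) - int (weight y)) * int (m choose max (weight x) (weight y))
     + int (lex_rank y) - int (lex_rank x)"

lemma f_lab_edge_sum:
  assumes x: "x \<in> bitstrings (Suc m)" and y: "y \<in> bitstrings (Suc m)"
    and odd: "odd (weight x)" and step: "weight y = weight x + 1 \<or> weight x = weight y + 1"
  shows "int (f_lab (Suc m) x + f_lab (Suc m) y) = 2 ^ Suc m + 1 + edge_offset m x y"
proof -
  let ?w = "weight x"
  have "even (weight y)" using odd step by auto
  note fx = f_lab_odd_weight[OF x odd] and fy = f_lab_even_weight[OF y this]
  have "?w \<noteq> 0" using odd_pos[OF odd] by simp
  then have pascal: "Suc m choose ?w = (m choose ?w) + (m choose (?w - 1))"
    by (cases ?w) auto
  from step consider (up) "weight y = ?w + 1" | (down) "?w = weight y + 1" by blast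
  then show ?thesis
  proof cases
    case up
    have "weight_count m (\<lambda>v. v < ?w) = weight_count m (\<lambda>v. v + 1 < ?w \<or> v = ?w - 1)"
      using \<open>?w \<noteq> 0\<close> by (intro weight_count_cong) auto
    also have "\<dots> = weight_count m (\<lambda>v. v + 1 < ?w) + (m choose (?w - 1))"
      by (subst weight_count_disj) (auto simp: weight_count_eq)
    finally have below: "weight_count m (\<lambda>v. v < ?w) = \<dots>" .
    have "weight_count m (\<lambda>v. ?w < v) = weight_count m (\<lambda>v. v = ?w + 1 \<or> ?w + 1 < v)"
      by (intro weight_count_cong) auto
    also have "\<dots> = (m choose (?w + 1)) + weight_count m (\<lambda>v. ?w + 1 < v)"
      by (subst weight_count_disj) (auto simp: weight_count_eq)
    finally have above: "weight_count m (\<lambda>v. ?w < v) = \<dots>" .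
    have "f_lab (Suc m) x + f_lab (Suc m) y + lex_rank x + (m choose (?w + 1))
        = 2 ^ Suc m + 1 + lex_rank y"
      using weight_count_trichotomy[of m ?w] fx fy pascal below above up by simp
    from arg_cong[OF this, of int] show ?thesis
      using up by (simp add: edge_offset_def)
  next
    case down
    have "weight_count m (\<lambda>v. v + 1 < ?w) = weight_count m (\<lambda>v. v < weight y)"
      using down by (intro weight_count_cong) auto
    then have "f_lab (Suc m) x + f_lab (Suc m) y + lex_rank x = 2 ^ Suc m + 1 + (m choose ?w) + lex_rank y"
      using weight_count_trichotomy[of m "weight y"] fx fy pascal down by simp
    from arg_cong[OF this, of int] show ?thesis
      using down by (simp add: edge_offset_def)
  qed
qed

lemma cube_adj_Nil [simp]: "\<not> cube_adj [] y"
  by (simp add: cube_adj_def)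

lemma cube_adj_Cons:
  "cube_adj (a # x) (b # y) \<longleftrightarrow> length x = length y \<and> (a = b \<and> cube_adj x y \<or> a \<noteq> b \<and> x = y)"
proof -
  let ?D = "{i. i < length x \<and> x ! i \<noteq> y ! i}"
  have "{i. i < length (a # x) \<and> (a # x) ! i \<noteq> (b # y) ! i} = (if a = b then {} else {0}) \<union> Suc ` ?D"
  proof (intro set_eqI)
    fix i show "i \<in> {i. i < length (a # x) \<and> (a # x) ! i \<noteq> (b # y) ! i} \<longleftrightarrow>
        i \<in> (if a = b then {} else {0}) \<union> Suc ` ?D"
      by (cases i) auto
  qed
  then have card: "card {i. i < length (a # x) \<and> (a # x) ! i \<noteq> (b # y) ! i}
      = (if a = b then 0 else 1) + card ?D"
    by (simp add: card_image)
  have "card ?D = 0 \<longleftrightarrow> x = y" if "length x = length y"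
    using that by (auto intro: nth_equalityI)
  then show ?thesis unfolding cube_adj_def card by auto
qed

lemma cube_adj_sym: "cube_adj x y \<Longrightarrow> cube_adj y x"
proof -
  assume adj: "cube_adj x y"
  then have len: "length x = length y" by (simp add: cube_adj_def)
  then have "{i. i < length y \<and> y ! i \<noteq> x ! i} = {i. i < length x \<and> x ! i \<noteq> y ! i}"
    by auto
  with adj len show ?thesis by (simp add: cube_adj_def)
qed

lemma cube_adj_map_Not: "cube_adj x y \<Longrightarrow> cube_adj (map Not x) (map Not y)"
  unfolding cube_adj_def by (simp cong: conj_cong)

lemma cube_adj_weight: "cube_adj x y \<Longrightarrow> weight y = weight x + 1 \<or> weight x = weight y + 1"
proof (induction x arbitrary: y)
  case (Cons a x)
  then obtain b y' where "y = b # y'"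
    by (cases y) (auto simp: cube_adj_def)
  with Cons show ?case by (cases a; cases b) (auto simp: cube_adj_Cons)
qed simp

lemma edge_sum_le_cube_str:
  assumes "u \<in> bitstrings n" "v \<in> bitstrings n" "cube_adj u v"
  shows "f u + f v \<le> cube_str f n"
proof -
  have "{f u + f v | u v. u \<in> bitstrings n \<and> v \<in> bitstrings n \<and> cube_adj u v}
      \<subseteq> (\<lambda>(u, v). f u + f v) ` (bitstrings n \<times> bitstrings n)"
    by auto
  then have "finite {f u + f v | u v. u \<in> bitstrings n \<and> v \<in> bitstrings n \<and> cube_adj u v}"
    by (rule finite_subset) simp
  then show ?thesis unfolding cube_str_def by (rule Max_ge) (use assms in blast)
qed

lemma edge_offset_Cons_Cons:
  assumes "length x = m" and "cube_adj x y"
  shows "edge_offset m (a # x) (a # y) = edge_offset m (b # x) (b # y)"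
proof -
  have "length y = m" using assms by (simp add: cube_adj_def)
  then have "edge_offset m (True # x) (True # y) = edge_offset m (False # x) (False # y)"
    using assms cube_adj_weight[OF assms(2)] by (auto simp: edge_offset_def)
  then show ?thesis by (cases a; cases b) simp_all
qed

lemma unit_edge:
  "True # replicate m False \<in> bitstrings (Suc m)" "replicate (Suc m) False \<in> bitstrings (Suc m)"
  "cube_adj (True # replicate m False) (replicate (Suc m) False)"
  "odd (weight (True # replicate m False))"
  "edge_offset m (True # replicate m False) (replicate (Suc m) False) = 0"
  by (simp_all add: bitstrings_def cube_adj_Cons edge_offset_def)

section \<open>Comparing edges of \<open>Q_n\<close> and \<open>Q_{n-2}\<close>\<close>

lemma binomial_le_central: "m choose k \<le> m choose nat \<lceil>real m / 2\<rceil>"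
proof -
  have "nat \<lceil>real m / 2\<rceil> = m - m div 2"
  proof (cases "even m")
    case False
    then obtain t where t: "m = 2 * t + 1" using oddE by blast
    have "\<lceil>real m / 2\<rceil> = int t + 1"
      by (rule ceiling_unique) (use t in auto)
    then show ?thesis using t by simp
  qed (auto elim: evenE)
  then show ?thesis
    using binomial_maximum[of m k] binomial_symmetric[of "m div 2" m] by simp
qed

lemma edge_sum_bound_by_lower_edge:
  assumes x: "x \<in> bitstrings (Suc (Suc (Suc p)))" and y: "y \<in> bitstrings (Suc (Suc (Suc p)))"
    and xy: "cube_adj x y" and odd_x: "odd (weight x)"
    and u: "u \<in> bitstrings (Suc p)" and v: "v \<in> bitstrings (Suc p)"
    and uv: "cube_adj u v" and odd_u: "odd (weight u)"
    and offset: "edge_offset (Suc (Suc p)) x y \<le> edge_offset p u v + int M"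
  shows "f_lab (Suc (Suc (Suc p))) x + f_lab (Suc (Suc (Suc p))) y
    \<le> cube_str (f_lab (Suc p)) (Suc p) + 3 * 2 ^ Suc p + M"
proof -
  have "int (f_lab (Suc (Suc (Suc p))) x + f_lab (Suc (Suc (Suc p))) y)
      = 2 ^ Suc (Suc (Suc p)) + 1 + edge_offset (Suc (Suc p)) x y"
    using f_lab_edge_sum[OF x y odd_x cube_adj_weight[OF xy]] .
  moreover have "int (f_lab (Suc p) u + f_lab (Suc p) v) = 2 ^ Suc p + 1 + edge_offset p u v"
    using f_lab_edge_sum[OF u v odd_u cube_adj_weight[OF uv]] .
  moreover have "f_lab (Suc p) u + f_lab (Suc p) v \<le> cube_str (f_lab (Suc p)) (Suc p)"
    using edge_sum_le_cube_str[OF u v uv] .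
  ultimately have "int (f_lab (Suc (Suc (Suc p))) x + f_lab (Suc (Suc (Suc p))) y)
      \<le> int (cube_str (f_lab (Suc p)) (Suc p) + 3 * 2 ^ Suc p + M)"
    using offset by simp
  then show ?thesis by (simp only: of_nat_le_iff)
qed

lemma complement_edge_odd_endpoint:
  assumes c: "c \<in> bitstrings (Suc p)" and d: "d \<in> bitstrings (Suc p)" and cd: "cube_adj c d"
    and odd_d: "odd (weight d)" and "odd p \<or> hd c = hd d"
  obtains u v where "u \<in> bitstrings (Suc p)" "v \<in> bitstrings (Suc p)" "cube_adj u v"
    "odd (weight u)" "edge_offset p u v = edge_offset p (map Not d) (map Not c)"
proof (cases "odd p")
  case True
  have "odd (weight (map Not d))"
    using True odd_d weight_le_length[of d] d by (simp add: weight_map_Not length_bitstrings)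
  then show ?thesis
    using that[of "map Not d" "map Not c"] c d cube_adj_map_Not[OF cube_adj_sym[OF cd]] by simp
next
  case False
  obtain a c' where c': "c = a # c'" and "c' \<in> bitstrings p"
    using c by (cases c) (auto simp: bitstrings_def)
  with \<open>odd p \<or> hd c = hd d\<close> False d obtain d' where d': "d = a # d'" and "d' \<in> bitstrings p"
    by (cases d) (auto simp: bitstrings_def)
  have adj': "cube_adj (map Not d') (map Not c')"
    using cd c' d' by (simp add: cube_adj_Cons cube_adj_map_Not cube_adj_sym)
  \<comment> \<open>For even \<open>p\<close> complementing all \<open>p + 1\<close> bits would change the parity of the weight;
    keeping the common first bit does not change the offset.\<close>
  show ?thesis
  proof (rule that[of "a # map Not d'" "a # map Not c'"])
    show "cube_adj (a # map Not d') (a # map Not c')"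
      using adj' \<open>c' \<in> bitstrings p\<close> \<open>d' \<in> bitstrings p\<close> by (simp add: cube_adj_Cons length_bitstrings)
    show "odd (weight (a # map Not d'))"
      using False odd_d d' weight_le_length[of d'] \<open>d' \<in> bitstrings p\<close>
      by (auto simp: weight_map_Not length_bitstrings)
    have "edge_offset p (a # map Not d') (a # map Not c')
        = edge_offset p ((\<not> a) # map Not d') ((\<not> a) # map Not c')"
      using adj' \<open>d' \<in> bitstrings p\<close> by (intro edge_offset_Cons_Cons) (simp_all add: length_bitstrings)
    then show "edge_offset p (a # map Not d') (a # map Not c') = edge_offset p (map Not d) (map Not c)"
      using c' d' by simp
  qed (use \<open>c' \<in> bitstrings p\<close> \<open>d' \<in> bitstrings p\<close> in simp_all)
qed

context
  fixes p Mp Mq :: nat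
  assumes le_Mp: "\<And>k. p choose k \<le> Mp" and le_Mq: "\<And>k. Suc p choose k \<le> Mq"
begin

lemma edge_offset_prefix_00_le:
  assumes c: "c \<in> bitstrings (Suc p)" and d: "d \<in> bitstrings (Suc p)" and cd: "cube_adj c d"
  shows "edge_offset (Suc (Suc p)) (False # False # c) (False # False # d) \<le> edge_offset p c d + Mp + Mq"
proof -
  have "max (weight c) (weight d) \<noteq> 0" using cube_adj_weight[OF cd] by auto
  then obtain W where W: "max (weight c) (weight d) = Suc W" using not0_implies_Suc by blast
  have "Suc (Suc p) choose Suc W = (p choose Suc W) + (p choose W) + (Suc p choose W)" by simp
  then show ?thesis
    using cube_adj_weight[OF cd] W le_Mp[of W] le_Mq[of W] by (auto simp: edge_offset_def)
qed

lemma edge_offset_second_bit_flip_le: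
  assumes c: "c \<in> bitstrings (Suc p)" and "a \<noteq> b"
  shows "edge_offset (Suc (Suc p)) (False # a # c) (False # b # c) \<le> Mq"
  using assms le_Mq[of "weight c"] by (cases a) (auto simp: edge_offset_def length_bitstrings)

lemma edge_offset_third_bit_flip_le:
  assumes e: "e \<in> bitstrings p" and "a \<noteq> b"
  shows "edge_offset (Suc (Suc p)) (False # True # a # e) (False # True # b # e) \<le> Mp + Mq"
  using assms le_Mp[of "weight e"] le_Mq[of "Suc (weight e)"]
  by (cases a) (auto simp: edge_offset_def length_bitstrings)

lemma edge_offset_prefix_01_le:
  assumes c: "c \<in> bitstrings (Suc p)" and d: "d \<in> bitstrings (Suc p)" and cd: "cube_adj c d"
  shows "edge_offset (Suc (Suc p)) (False # True # c) (False # True # d)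
    \<le> edge_offset p (map Not d) (map Not c) + Mp + Mq"
proof -
  let ?s = "weight c" and ?t = "weight d"
  have len: "length c = Suc p" "length d = Suc p" using c d by (simp_all add: length_bitstrings)
  have bounds: "?s \<le> Suc p" "?t \<le> Suc p" using weight_le_length len by metis+
  have rank_Not: "int (lex_rank (map Not c)) = int (Suc p choose ?s) - 1 - int (lex_rank c)"
    "int (lex_rank (map Not d)) = int (Suc p choose ?t) - 1 - int (lex_rank d)"
    using lex_rank_map_Not[of c] lex_rank_map_Not[of d] len by simp_all
  have weight_Not: "weight (map Not c) = Suc p - ?s" "weight (map Not d) = Suc p - ?t"
    using len by (simp_all add: weight_map_Not)
  from cube_adj_weight[OF cd] consider (up) "?t = ?s + 1" | (down) "?s = ?t + 1" by blast
  then show ?thesis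
  proof cases
    case up
    then show ?thesis
      using len bounds rank_Not weight_Not le_Mp[of "Suc p - ?s"]
      by (simp add: edge_offset_def max_def)
  next
    case down
    have "Suc p choose ?t = (p choose ?t) + (p choose (Suc p - ?t))"
      using bounds down by (cases ?t) (simp_all add: binomial_symmetric[symmetric])
    then show ?thesis
      using down len bounds rank_Not weight_Not le_Mp[of ?t] le_Mq[of "Suc ?t"]
      by (simp add: edge_offset_def max_def)
  qed
qed

lemma edge_sum_le_of_prefix_01:
  assumes c: "c \<in> bitstrings (Suc p)" and d: "d \<in> bitstrings (Suc p)" and cd: "cube_adj c d"
    and even_c: "even (weight c)"
  shows "f_lab (Suc (Suc (Suc p))) (False # True # c) + f_lab (Suc (Suc (Suc p))) (False # True # d)
    \<le> cube_str (f_lab (Suc p)) (Suc p) + 3 * 2 ^ Suc p + (Mp + Mq)"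
proof -
  have "odd (weight d)" using even_c cube_adj_weight[OF cd] by auto
  note bound = edge_sum_bound_by_lower_edge[of "False # True # c" p "False # True # d"]
  have edge: "False # True # c \<in> bitstrings (Suc (Suc (Suc p)))"
    "False # True # d \<in> bitstrings (Suc (Suc (Suc p)))"
    "cube_adj (False # True # c) (False # True # d)" "odd (weight (False # True # c))"
    using c d cd even_c by (simp_all add: cube_adj_Cons length_bitstrings)
  show ?thesis
  proof (cases "odd p \<or> hd c = hd d")
    case True
    with complement_edge_odd_endpoint[OF c d cd \<open>odd (weight d)\<close>] obtain u v
      where "u \<in> bitstrings (Suc p)" "v \<in> bitstrings (Suc p)" "cube_adj u v" "odd (weight u)"
        "edge_offset p u v = edge_offset p (map Not d) (map Not c)"
      by blast
    then show ?thesis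
      using bound[OF edge] edge_offset_prefix_01_le[OF c d cd] by simp
  next
    case False
    then obtain a b e where "c = a # e" "d = b # e" "a \<noteq> b" "e \<in> bitstrings p"
      using c d cd by (cases c; cases d) (auto simp: cube_adj_Cons bitstrings_def)
    then show ?thesis
      using bound[OF edge unit_edge(1-4)] edge_offset_third_bit_flip_le unit_edge(5) by simp
  qed
qed

lemma edge_sum_le_of_leading_zeros:
  assumes x: "x \<in> bitstrings (Suc (Suc (Suc p)))" and y: "y \<in> bitstrings (Suc (Suc (Suc p)))"
    and xy: "cube_adj x y" and x0: "x ! 0 = False" and y0: "y ! 0 = False"
    and odd_x: "odd (weight x)"
  shows "f_lab (Suc (Suc (Suc p))) x + f_lab (Suc (Suc (Suc p))) y
    \<le> cube_str (f_lab (Suc p)) (Suc p) + 3 * 2 ^ Suc p + (Mp + Mq)"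
proof -
  obtain a c where xc: "x = False # a # c"
    using x x0 by (cases x; cases "tl x") (auto simp: bitstrings_def)
  obtain b d where yd: "y = False # b # d"
    using y y0 by (cases y; cases "tl y") (auto simp: bitstrings_def)
  have c: "c \<in> bitstrings (Suc p)" and d: "d \<in> bitstrings (Suc p)"
    using x y xc yd by auto
  note bound = edge_sum_bound_by_lower_edge[OF x y xy odd_x]
  have "a = b \<and> cube_adj c d \<or> a \<noteq> b \<and> c = d"
    using xy xc yd by (simp add: cube_adj_Cons)
  then consider (flip) "a \<noteq> b" "c = d" | (zero) "\<not> a" "\<not> b" "cube_adj c d"
    | (one) a b "cube_adj c d"
    by blast
  then show ?thesis
  proof cases
    case flip
    then show ?thesis
      using bound[OF unit_edge(1-4), of "Mp + Mq"] edge_offset_second_bit_flip_le[OF c flip(1)]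
        unit_edge(5) xc yd by simp
  next
    case zero
    then show ?thesis
      using bound[OF c d zero(3)] edge_offset_prefix_00_le[OF c d zero(3)] odd_x xc yd by simp
  next
    case one
    then show ?thesis
      using edge_sum_le_of_prefix_01[OF c d one(3)] odd_x xc yd by simp
  qed
qed

end

theorem theorem2p4:
  fixes n :: nat and x y :: "bool list"
  assumes "n \<ge> 5"
    and "x \<in> bitstrings n" and "y \<in> bitstrings n" and "cube_adj x y"
    and "f_lab n x + f_lab n y = cube_str (f_lab n) n"
    and "x ! 0 = False" and "y ! 0 = False"
  shows "cube_str (f_lab n) n \<le> cube_str (f_lab (n-2)) (n-2) + 3 * 2^(n-2)
           + ((n-3) choose (nat \<lceil>real (n-3) / 2\<rceil>))
           + ((n-2) choose (nat \<lceil>real (n-2) / 2\<rceil>))"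
proof -
  obtain p where n: "n = Suc (Suc (Suc p))"
    using assms(1) by (intro that[of "n - 3"]) simp
  note bound = edge_sum_le_of_leading_zeros[of p, OF binomial_le_central binomial_le_central]
  have "f_lab n x + f_lab n y \<le> cube_str (f_lab (Suc p)) (Suc p) + 3 * 2 ^ Suc p
      + ((p choose nat \<lceil>real p / 2\<rceil>) + (Suc p choose nat \<lceil>real (Suc p) / 2\<rceil>))"
  proof (cases "odd (weight x)")
    case True
    then show ?thesis using bound[of x y] assms(2-4,6,7) n by simp
  next
    case False
    then have "odd (weight y)" using cube_adj_weight[OF assms(4)] by auto
    then show ?thesis using bound[of y x] cube_adj_sym[OF assms(4)] assms(2,3,6,7) n by simp
  qed
  then show ?thesis using assms(5) n by simp
qed

end
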